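(* With the notation of the context, let $N\ge2$ and $Q^o(\alpha_i)=\theta/(N+i-1)$, $1\le i\le N$, where $\theta>0$ is chosen so that $\sum_iQ^o(\alpha_i)=1$. Then $Q^o(\alpha_i)<Q^*(\alpha_i)+\frac{\lg e}{2N^2}$ for all $i$, and $L(Q^o)<H(p)+D(p\|q)+\frac{\lg e}{2N}$.
   Context: Let $\mathcal S$ be a finite alphabet with $|\mathcal S|\ge2$, $p$ a probability distribution on $\mathcal S$ with $p(s)>0$, $N_s$ ($s\in\mathcal S$) positive integers, $N=\sum_sN_s$, $q(s)=N_s/N$, $\lg=\log_2$, and $\kappa_s=\lceil\lg(N/N_s)\rceil$ (so $\kappa_s\ge1$ and $N\le 2^{\kappa_s}N_s<2N$). Let $\alpha_1,\dots,\alpha_N$ be the states. For a probability distribution $Q$ on $\{\alpha_1,\dots,\alpha_N\}$ define $L(Q)=\sum_s p(s)\sum_{i=1}^N Q(\alpha_i)\ell_s(i)$, where $\ell_s(i)=\kappa_s-1$ if $i\le 2^{\kappa_s}N_s-N$ and $\ell_s(i)=\kappa_s$ otherwise. (This is the average code length of the Yokoo–Dubé-type sAEDS, whose state $\alpha_i$ encodes $s$ with $\ell_s(i)$ bits, when $Q$ is its stationary distribution with states indexed in non-increasing order of $Q$.) $Q^*(\alpha_i)=\lg\frac{N+i}{N+i-1}$, which sums to 1. $H(p)=-\sum p\lg p$, $D(p\|q)=\sum p\lg(p/q)$. *)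

theory Defs
  imports Complex_Main
begin

definition lg :: "real \<Rightarrow> real" where "lg x = log 2 x"

definition totalN :: "'s set \<Rightarrow> ('s \<Rightarrow> nat) \<Rightarrow> nat" where
  "totalN S Ns = (\<Sum>s\<in>S. Ns s)"

definition kappa :: "'s set \<Rightarrow> ('s \<Rightarrow> nat) \<Rightarrow> 's \<Rightarrow> nat" where
  "kappa S Ns s = nat \<lceil>lg (real (totalN S Ns) / real (Ns s))\<rceil>"

(* code length of symbol s in state alpha_i *)
definition ell :: "'s set \<Rightarrow> ('s \<Rightarrow> nat) \<Rightarrow> 's \<Rightarrow> nat \<Rightarrow> real" where
  "ell S Ns s i =
     (if real i \<le> 2 ^ kappa S Ns s * real (Ns s) - real (totalN S Ns)
      then real (kappa S Ns s) - 1 else real (kappa S Ns s))"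

(* average code length; Q i is the probability of state alpha_i, i = 1..N *)
definition avgL :: "'s set \<Rightarrow> ('s \<Rightarrow> real) \<Rightarrow> ('s \<Rightarrow> nat) \<Rightarrow> (nat \<Rightarrow> real) \<Rightarrow> real" where
  "avgL S p Ns Q = (\<Sum>s\<in>S. p s * (\<Sum>i=1..totalN S Ns. Q i * ell S Ns s i))"

definition Qstar :: "nat \<Rightarrow> nat \<Rightarrow> real" where
  "Qstar N i = lg ((real N + real i) / (real N + real i - 1))"

definition entropy :: "'s set \<Rightarrow> ('s \<Rightarrow> real) \<Rightarrow> real" where
  "entropy S p = - (\<Sum>s\<in>S. p s * lg (p s))"

definition qdist :: "'s set \<Rightarrow> ('s \<Rightarrow> nat) \<Rightarrow> 's \<Rightarrow> real" where
  "qdist S Ns s = real (Ns s) / real (totalN S Ns)"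

definition KL :: "'s set \<Rightarrow> ('s \<Rightarrow> real) \<Rightarrow> ('s \<Rightarrow> real) \<Rightarrow> real" where
  "KL S p q = (\<Sum>s\<in>S. p s * lg (p s / q s))"

end

theory Submission
  imports Defs
begin

text \<open>
  Write \<open>m = N + i - 1\<close>, so that \<open>Q\<^sup>o(i) = \<theta>/m\<close> and \<open>Q\<^sup>*(i) = lg (1 + 1/m)\<close>.
  Since \<open>ln (1 + x) < x\<close>, the normalisation \<open>\<Sum>Q\<^sup>* = 1 = \<Sum>Q\<^sup>o\<close> forces
  \<open>\<theta> < lg e\<close>, and \<open>ln (1 + x) \<ge> x - x\<^sup>2/2\<close> then gives
  \<open>Q\<^sup>o(i) < lg e / m \<le> Q\<^sup>*(i) + lg e / (2 m\<^sup>2)\<close> with \<open>m \<ge> N\<close>.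

  For a fixed symbol \<open>s\<close>, the code length is \<open>\<kappa>\<^sub>s - 1\<close> on the states \<open>i \<le> M\<close>,
  \<open>M = 2\<^bsup>\<kappa>\<^sub>s\<^esup> N\<^sub>s - N < N\<close>, and \<open>\<kappa>\<^sub>s\<close> above, so its expectation is
  \<open>\<kappa>\<^sub>s - 1 + Q\<^sup>o(i > M)\<close>. As \<open>Q\<^sup>*\<close> telescopes,
  \<open>Q\<^sup>*(i > M) = lg (2N / (N + M)) = 1 - \<kappa>\<^sub>s + lg (N / N\<^sub>s)\<close>, and the pointwise
  errors add up to less than \<open>N \<cdot> lg e / (2N\<^sup>2)\<close>. Averaging \<open>lg (N / N\<^sub>s)\<close> over
  \<open>p\<close> gives \<open>H(p) + D(p\<parallel>q)\<close>.
\<close>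

lemma ln_one_plus_quadratic_lower_bound:
  fixes x :: real
  assumes "0 \<le> x"
  shows "x - x\<^sup>2 / 2 \<le> ln (1 + x)"
proof -
  let ?g = "\<lambda>t::real. ln (1 + t) - t + t\<^sup>2 / 2"
  have "?g 0 \<le> ?g x"
  proof (rule DERIV_nonneg_imp_nondecreasing[OF assms])
    fix t :: real
    assume t: "0 \<le> t" "t \<le> x"
    have "(?g has_real_derivative 1 / (1 + t) - 1 + t) (at t)"
      using t by (auto intro!: derivative_eq_intros)
    moreover have "1 / (1 + t) - 1 + t = t\<^sup>2 / (1 + t)"
      using t by (simp add: field_simps power2_eq_square)
    ultimately show "\<exists>y. (?g has_real_derivative y) (at t) \<and> 0 \<le> y"
      using t by auto
  qed
  then show ?thesis by simp
qed

lemma lg_exp_1: "lg (exp 1) = 1 / ln 2"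
  by (simp add: lg_def log_def)

lemma lg_one_plus_less:
  fixes x :: real
  assumes "0 < x"
  shows "lg (1 + x) < lg (exp 1) * x"
  using ln_add_one_self_less_self[OF assms] by (simp add: lg_def log_def divide_strict_right_mono)

lemma lg_one_plus_quadratic_lower_bound:
  fixes x :: real
  assumes "0 \<le> x"
  shows "lg (exp 1) * (x - x\<^sup>2 / 2) \<le> lg (1 + x)"
  using ln_one_plus_quadratic_lower_bound[OF assms] by (simp add: lg_def log_def divide_right_mono)

lemma Qstar_eq_lg_one_plus:
  assumes "0 < real N + real i - 1"
  shows "Qstar N i = lg (1 + 1 / (real N + real i - 1))"
  using assms by (simp add: Qstar_def field_simps)

lemma sum_Qstar_telescope:
  assumes "0 < N + m" and "m \<le> n"
  shows "(\<Sum>i = Suc m..n. Qstar N i) = lg (real N + real n) - lg (real N + real m)"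
proof -
  have "Qstar N i = lg (real N + real i) - lg (real N + real (i - 1))" if "i \<in> {Suc m..n}" for i
  proof -
    have "0 < real N + real i - 1"
      using that assms(1) by auto
    then show ?thesis
      using that by (simp add: Qstar_def lg_def log_divide of_nat_diff add_diff_eq)
  qed
  then have "(\<Sum>i = Suc m..n. Qstar N i)
      = (\<Sum>i = Suc m..n. lg (real N + real i) - lg (real N + real (i - 1)))"
    by (rule sum.cong[OF refl])
  also have "\<dots> = lg (real N + real n) - lg (real N + real m)"
    using sum_telescope''[OF assms(2), of "\<lambda>i. lg (real N + real i)"] by simp
  finally show ?thesis .
qed

lemma sum_Qstar:
  assumes "0 < N"
  shows "(\<Sum>i = 1..N. Qstar N i) = 1"
proof -
  have "lg (real N + real N) = 1 + lg (real N)"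
    using assms by (simp add: lg_def log_mult flip: mult_2)
  then show ?thesis
    using sum_Qstar_telescope[of N 0 N] assms by simp
qed

lemma normalizer_less_lg_e:
  fixes \<theta> :: real
  assumes "0 < N" and "(\<Sum>i = 1..N. \<theta> / (real N + real i - 1)) = 1"
  shows "\<theta> < lg (exp 1)"
proof -
  define S where "S = (\<Sum>i = 1..N. 1 / (real N + real i - 1))"
  have "\<theta> * S = 1"
    using assms(2) by (simp add: S_def sum_distrib_left)
  moreover have "0 < S"
    unfolding S_def using assms(1) by (intro sum_pos) auto
  ultimately have "0 < \<theta>"
    by (metis zero_less_mult_pos2 zero_less_one)
  have "1 = (\<Sum>i = 1..N. Qstar N i)"
    using sum_Qstar[OF assms(1)] by simp
  also have "\<dots> < (\<Sum>i = 1..N. lg (exp 1) * (1 / (real N + real i - 1)))"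
  proof (rule sum_strict_mono)
    fix i assume "i \<in> {1..N}"
    then have "0 < real N + real i - 1"
      using assms(1) by auto
    then show "Qstar N i < lg (exp 1) * (1 / (real N + real i - 1))"
      using Qstar_eq_lg_one_plus lg_one_plus_less[of "1 / (real N + real i - 1)"] by simp
  qed (use assms(1) in auto)
  also have "\<dots> = lg (exp 1) * S"
    by (simp add: S_def sum_distrib_left)
  finally have "\<theta> * 1 < \<theta> * (lg (exp 1) * S)"
    using \<open>0 < \<theta>\<close> by simp
  also have "\<theta> * (lg (exp 1) * S) = lg (exp 1)"
    using \<open>\<theta> * S = 1\<close> by (metis mult.left_commute mult_1_right)
  finally show ?thesis
    by simp
qed

lemma normalized_harmonic_less_Qstar:
  fixes \<theta> :: real
  assumes "0 < N" and "(\<Sum>i = 1..N. \<theta> / (real N + real i - 1)) = 1" and "i \<in> {1..N}"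
  shows "\<theta> / (real N + real i - 1) < Qstar N i + lg (exp 1) / (2 * real N ^ 2)"
proof -
  define x where "x = 1 / (real N + real i - 1)"
  have x: "0 < x" "x \<le> 1 / real N"
    using assms(1,3) by (auto simp: x_def frac_le)
  have "\<theta> / (real N + real i - 1) < lg (exp 1) * x"
    using normalizer_less_lg_e[OF assms(1,2)] x(1) by (simp add: x_def divide_strict_right_mono)
  also have "\<dots> = lg (exp 1) * (x - x\<^sup>2 / 2) + lg (exp 1) * x\<^sup>2 / 2"
    by (simp add: algebra_simps)
  also have "\<dots> \<le> Qstar N i + lg (exp 1) * (1 / real N)\<^sup>2 / 2"
  proof (rule add_mono)
    show "lg (exp 1) * (x - x\<^sup>2 / 2) \<le> Qstar N i"
      using lg_one_plus_quadratic_lower_bound[of x] Qstar_eq_lg_one_plus[of N i] x assms(1)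
      by (simp add: x_def)
    show "lg (exp 1) * x\<^sup>2 / 2 \<le> lg (exp 1) * (1 / real N)\<^sup>2 / 2"
      using x by (simp add: lg_exp_1 power_mono divide_right_mono)
  qed
  also have "lg (exp 1) * (1 / real N)\<^sup>2 / 2 = lg (exp 1) / (2 * real N ^ 2)"
    by (simp add: power_divide)
  finally show ?thesis .
qed

lemma kappa_bounds:
  assumes "0 < Ns s" and "Ns s \<le> totalN S Ns"
  shows "totalN S Ns \<le> 2 ^ kappa S Ns s * Ns s"
    and "2 ^ kappa S Ns s * Ns s < 2 * totalN S Ns"
proof -
  define l where "l = lg (real (totalN S Ns) / real (Ns s))"
  define k where "k = kappa S Ns s"
  have "0 \<le> l"
    using assms by (simp add: l_def lg_def)
  then have "real k = of_int \<lceil>l\<rceil>"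
    by (simp add: k_def kappa_def l_def)
  then have k: "l \<le> real k" "real k < l + 1"
    by linarith+
  have two_powr_l: "2 powr l = real (totalN S Ns) / real (Ns s)"
    using assms by (simp add: l_def lg_def)
  have "real (totalN S Ns) / real (Ns s) \<le> 2 ^ k"
    using k(1) two_powr_l by (metis powr_mono one_le_numeral powr_realpow zero_less_numeral)
  then have "real (totalN S Ns) \<le> real (2 ^ k * Ns s)"
    using assms(1) by (simp add: divide_le_eq)
  then show "totalN S Ns \<le> 2 ^ kappa S Ns s * Ns s"
    by (simp only: k_def of_nat_le_iff)
  have "(2::real) ^ k < 2 powr (l + 1)"
    using k(2) by (simp add: powr_realpow[symmetric] powr_less_mono)
  also have "\<dots> = 2 * (real (totalN S Ns) / real (Ns s))"
    using two_powr_l by (simp add: powr_add)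
  finally have "real (2 ^ k * Ns s) < real (2 * totalN S Ns)"
    using assms(1) by (simp add: less_divide_eq)
  then show "2 ^ kappa S Ns s * Ns s < 2 * totalN S Ns"
    by (simp only: k_def of_nat_less_iff)
qed

lemma ell_eq:
  assumes "totalN S Ns \<le> 2 ^ kappa S Ns s * Ns s"
  shows "ell S Ns s i
    = (if i \<le> 2 ^ kappa S Ns s * Ns s - totalN S Ns then real (kappa S Ns s) - 1
       else real (kappa S Ns s))"
proof -
  have "2 ^ kappa S Ns s * real (Ns s) - real (totalN S Ns)
      = real (2 ^ kappa S Ns s * Ns s - totalN S Ns)"
    using assms by (simp add: of_nat_diff)
  then show ?thesis
    by (simp add: ell_def del: of_nat_diff)
qed

lemma expected_ell_eq:
  fixes S :: "'s set" and Ns :: "'s \<Rightarrow> nat" and s :: 's and Q :: "nat \<Rightarrow> real"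
  defines "N \<equiv> totalN S Ns" and "M \<equiv> 2 ^ kappa S Ns s * Ns s - totalN S Ns"
  assumes "N \<le> 2 ^ kappa S Ns s * Ns s"
  shows "(\<Sum>i = 1..N. Q i * ell S Ns s i)
    = (real (kappa S Ns s) - 1) * (\<Sum>i = 1..N. Q i) + (\<Sum>i = Suc M..N. Q i)"
proof -
  have "Q i * ell S Ns s i = (real (kappa S Ns s) - 1) * Q i + (if M < i then Q i else 0)" for i
    using ell_eq[of S Ns s i] assms by (simp add: M_def N_def algebra_simps)
  then have "(\<Sum>i = 1..N. Q i * ell S Ns s i)
      = (real (kappa S Ns s) - 1) * (\<Sum>i = 1..N. Q i) + (\<Sum>i = 1..N. if M < i then Q i else 0)"
    by (simp add: sum.distrib sum_distrib_left)
  also have "(\<Sum>i = 1..N. if M < i then Q i else 0) = (\<Sum>i\<in>{i \<in> {1..N}. M < i}. Q i)"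
    by (rule sum.inter_filter[symmetric]) simp
  also have "{i \<in> {1..N}. M < i} = {Suc M..N}"
    by auto
  finally show ?thesis .
qed

lemma expected_ell_less:
  fixes S :: "'s set" and Ns :: "'s \<Rightarrow> nat" and s :: 's and Q :: "nat \<Rightarrow> real"
  defines "N \<equiv> totalN S Ns"
  assumes "0 < Ns s" and "Ns s \<le> N"
    and "(\<Sum>i = 1..N. Q i) = 1" and "\<forall>i\<in>{1..N}. Q i < Qstar N i + c" and "0 \<le> c"
  shows "(\<Sum>i = 1..N. Q i * ell S Ns s i) < lg (real N / real (Ns s)) + real N * c"
proof -
  define k where "k = kappa S Ns s"
  define K where "K = 2 ^ k * Ns s"
  define M where "M = K - N"
  have K: "N \<le> K" "K < 2 * N"
    using kappa_bounds[of Ns s S] assms(2,3) by (simp_all add: K_def k_def N_def)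
  then have M: "M < N" "N + M = K"
    by (simp_all add: M_def)
  have "(\<Sum>i = Suc M..N. Q i) < (\<Sum>i = Suc M..N. Qstar N i + c)"
    using assms(5) M(1) by (intro sum_strict_mono) auto
  also have "\<dots> = lg (real N + real N) - lg (real K) + real (N - M) * c"
    using sum_Qstar_telescope[of N M N] M assms(2,3) by (simp add: sum.distrib flip: of_nat_add)
  also have "\<dots> \<le> lg (real N + real N) - lg (real K) + real N * c"
    using assms(6) by (simp add: mult_right_mono)
  also have "lg (real N + real N) - lg (real K) = 1 - real k + lg (real N / real (Ns s))"
    using assms(2,3) by (simp add: K_def lg_def log_mult log_divide flip: mult_2)
  finally have "(\<Sum>i = Suc M..N. Q i) < 1 - real k + lg (real N / real (Ns s)) + real N * c" .
  moreover have "(\<Sum>i = 1..N. Q i * ell S Ns s i) = real k - 1 + (\<Sum>i = Suc M..N. Q i)"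
    using expected_ell_eq[of S Ns s Q] K(1) assms(4) by (simp add: K_def k_def M_def N_def)
  ultimately show ?thesis
    by simp
qed

lemma entropy_plus_KL_qdist:
  assumes "finite S" and "\<forall>s\<in>S. 0 < p s" and "\<forall>s\<in>S. 0 < Ns s"
  shows "entropy S p + KL S p (qdist S Ns)
    = (\<Sum>s\<in>S. p s * lg (real (totalN S Ns) / real (Ns s)))"
proof -
  have "p s * lg (p s / qdist S Ns s) - p s * lg (p s)
      = p s * lg (real (totalN S Ns) / real (Ns s))" if "s \<in> S" for s
  proof -
    have "0 < Ns s" and "Ns s \<le> totalN S Ns"
      using assms that by (simp_all add: totalN_def member_le_sum)
    then show ?thesis
      using assms(2) that by (simp add: lg_def qdist_def log_divide log_mult algebra_simps)
  qed
  then show ?thesis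
    by (simp add: entropy_def KL_def flip: sum_subtractf)
qed

lemma avgL_less:
  fixes S :: "'s set" and p :: "'s \<Rightarrow> real" and Ns :: "'s \<Rightarrow> nat" and Q :: "nat \<Rightarrow> real"
  defines "N \<equiv> totalN S Ns"
  assumes "finite S" and "S \<noteq> {}" and "\<forall>s\<in>S. 0 < p s" and "(\<Sum>s\<in>S. p s) = 1"
    and "\<forall>s\<in>S. 0 < Ns s"
    and "(\<Sum>i = 1..N. Q i) = 1" and "\<forall>i\<in>{1..N}. Q i < Qstar N i + c" and "0 \<le> c"
  shows "avgL S p Ns Q < entropy S p + KL S p (qdist S Ns) + real N * c"
proof -
  have "avgL S p Ns Q < (\<Sum>s\<in>S. p s * (lg (real N / real (Ns s)) + real N * c))"
    unfolding avgL_def N_def[symmetric]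
  proof (rule sum_strict_mono[OF assms(2,3)])
    fix s assume "s \<in> S"
    moreover have "Ns s \<le> N"
      using assms(2) \<open>s \<in> S\<close> by (simp add: N_def totalN_def member_le_sum)
    ultimately show "p s * (\<Sum>i = 1..N. Q i * ell S Ns s i)
        < p s * (lg (real N / real (Ns s)) + real N * c)"
      using expected_ell_less[of Ns s S Q c] assms by (simp add: N_def)
  qed
  also have "\<dots> = (\<Sum>s\<in>S. p s * lg (real N / real (Ns s))) + real N * c"
    using assms(5) by (simp add: distrib_left sum.distrib flip: sum_distrib_right)
  finally show ?thesis
    using entropy_plus_KL_qdist[OF assms(2,4,6)] by (simp add: N_def)
qed

theorem lemma3:
  fixes S :: "'s set" and p :: "'s \<Rightarrow> real" and Ns :: "'s \<Rightarrow> nat" and \<theta> :: real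
  assumes "finite S" and "card S \<ge> 2"
    and "\<forall>s\<in>S. p s > 0" and "(\<Sum>s\<in>S. p s) = 1"
    and "\<forall>s\<in>S. Ns s > 0"
    and "totalN S Ns \<ge> 2"
    and "\<theta> > 0"
    and "(\<Sum>i=1..totalN S Ns. \<theta> / (real (totalN S Ns) + real i - 1)) = 1"
  shows "(\<forall>i\<in>{1..totalN S Ns}.
            \<theta> / (real (totalN S Ns) + real i - 1)
              < Qstar (totalN S Ns) i + lg (exp 1) / (2 * real (totalN S Ns) ^ 2))
       \<and> avgL S p Ns (\<lambda>i. \<theta> / (real (totalN S Ns) + real i - 1))
           < entropy S p + KL S p (qdist S Ns) + lg (exp 1) / (2 * real (totalN S Ns))"
proof -
  define N where "N = totalN S Ns"
  define c where "c = lg (exp 1) / (2 * real N ^ 2)"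
  have "0 < N"
    using assms(6) by (simp add: N_def)
  have Qo_less: "\<forall>i\<in>{1..N}. \<theta> / (real N + real i - 1) < Qstar N i + c"
    using normalized_harmonic_less_Qstar[OF \<open>0 < N\<close>] assms(8) by (simp add: N_def c_def)
  have "S \<noteq> {}"
    using assms(2) by auto
  moreover have "0 \<le> c" and "real N * c = lg (exp 1) / (2 * real N)"
    by (simp_all add: c_def lg_exp_1 power2_eq_square)
  ultimately have "avgL S p Ns (\<lambda>i. \<theta> / (real N + real i - 1))
      < entropy S p + KL S p (qdist S Ns) + lg (exp 1) / (2 * real N)"
    using avgL_less[of S p Ns "\<lambda>i. \<theta> / (real N + real i - 1)" c] Qo_less assms
    by (simp add: N_def)
  with Qo_less show ?thesis
    by (simp add: N_def c_def)
qed

end
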